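(* Consider the replace-after-random-time process with failure rate $\lambda>0$ and replacement-time density $f$. If there exist $\epsilon>0$ and $\delta>0$ such that $f(r)>\epsilon$ for all $0<r<\delta$, then $E[N(t)]=\infty$ for every $t>0$.
   Context: Let $X_1,X_2,\ldots$ be independent random variables, each exponentially distributed with rate $\lambda>0$ (density $\lambda e^{-\lambda x}$ for $x>0$). Let $R$ be a random variable, independent of $X_1,X_2,\ldots$, with an absolutely continuous distribution on $(0,\infty)$ with probability density function $f$. For $t\ge0$ define $N(t)=\max\{n\ge0:\sum_{k=1}^n\min(X_k,R)\le t\}$; $\{N(t)\}$ is called the replace-after-random-time (RaRT) process. *)

theory Defs
  imports "HOL-Probability.Probability"
begin

text \<open>X k is the (k+1)-th failure time X_(k+1); the k-th inter-renewal time is min(X_k, R).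
  N(t) = max{n >= 0 : sum_(k=1)^n min(X_k,R) <= t}, taken as a supremum in ennreal
  (it equals the maximum whenever the maximum exists, and is infinity otherwise).\<close>

definition rart_N :: "(nat \<Rightarrow> 'a \<Rightarrow> real) \<Rightarrow> ('a \<Rightarrow> real) \<Rightarrow> real \<Rightarrow> 'a \<Rightarrow> ennreal" where
  "rart_N X R t \<omega> = (SUP n \<in> {n::nat. (\<Sum>k<n. min (X k \<omega>) (R \<omega>)) \<le> t}. of_nat n)"

end

theory Submission
  imports Defs
begin

text \<open>If R \<le> t/n, the first n inter-renewal times min(X_k, R)
  already fit into [0, t], so N(t) \<ge> n. Hence N(t) dominates the
  number of j \<ge> 1 with R \<le> t/j, and E[N(t)] \<ge> \<Sum>_j P(R \<le> t/j). A density bounded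
  below by \<epsilon> near 0 gives P(R \<le> t/j) \<ge> \<epsilon> c/j for a fixed c > 0, and the harmonic
  series diverges.\<close>

lemma rart_N_ge:
  assumes "real n * R \<omega> \<le> t"
  shows "of_nat n \<le> rart_N X R t \<omega>"
proof -
  have "(\<Sum>k<n. min (X k \<omega>) (R \<omega>)) \<le> real n * R \<omega>"
    using sum_mono[of "{..<n}" "\<lambda>k. min (X k \<omega>) (R \<omega>)" "\<lambda>_. R \<omega>"] by simp
  with assms have "n \<in> {n. (\<Sum>k<n. min (X k \<omega>) (R \<omega>)) \<le> t}" by simp
  then show ?thesis unfolding rart_N_def by (rule SUP_upper)
qed

lemma rart_N_ge_suminf_indicator:
  "(\<Sum>j. indicator {\<omega>. R \<omega> \<le> t / real (Suc j)} \<omega>) \<le> rart_N X R t \<omega>"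
proof (rule suminf_le_const[OF summableI])
  fix m
  define S where "S = {j\<in>{..<m}. R \<omega> \<le> t / real (Suc j)}"
  have "finite S" unfolding S_def by auto
  have sum_eq: "(\<Sum>j<m. indicator {\<omega>. R \<omega> \<le> t / real (Suc j)} \<omega>) = (of_nat (card S) :: ennreal)"
    unfolding S_def by (simp add: indicator_def sum.If_cases Int_def)
  show "(\<Sum>j<m. indicator {\<omega>. R \<omega> \<le> t / real (Suc j)} \<omega>) \<le> rart_N X R t \<omega>"
  proof (cases "S = {}")
    case True
    then show ?thesis unfolding sum_eq by simp
  next
    case False
    with \<open>finite S\<close> have "Max S \<in> S" by simp
    then have "real (Suc (Max S)) * R \<omega> \<le> t"
      unfolding S_def by (simp add: field_simps)
    then have "of_nat (Suc (Max S)) \<le> rart_N X R t \<omega>" by (rule rart_N_ge)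
    moreover have "card S \<le> Suc (Max S)" using card_le_Suc_Max[OF \<open>finite S\<close>] .
    ultimately show ?thesis
      unfolding sum_eq by (meson of_nat_le_iff order_trans)
  qed
qed

lemma nn_integral_rart_N_ge:
  assumes "R \<in> borel_measurable M"
  shows "(\<Sum>j. emeasure M {\<omega>\<in>space M. R \<omega> \<le> t / real (Suc j)}) \<le> (\<integral>\<^sup>+ \<omega>. rart_N X R t \<omega> \<partial>M)"
proof -
  have "(\<Sum>j. emeasure M {\<omega>\<in>space M. R \<omega> \<le> t / real (Suc j)})
      = (\<Sum>j. \<integral>\<^sup>+ \<omega>. indicator {\<omega>\<in>space M. R \<omega> \<le> t / real (Suc j)} \<omega> \<partial>M)"
    using assms by (simp add: nn_integral_indicator)
  also have "\<dots> = (\<integral>\<^sup>+ \<omega>. (\<Sum>j. indicator {\<omega>\<in>space M. R \<omega> \<le> t / real (Suc j)} \<omega>) \<partial>M)"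
    using assms by (intro nn_integral_suminf[symmetric]) measurable
  also have "\<dots> \<le> (\<integral>\<^sup>+ \<omega>. rart_N X R t \<omega> \<partial>M)"
    using rart_N_ge_suminf_indicator by (intro nn_integral_mono) (simp add: indicator_def)
  finally show ?thesis .
qed

lemma distributed_emeasure_le_ge:
  assumes "distributed M lborel R g"
    and "0 \<le> b" and "b \<le> a" and "0 \<le> \<epsilon>"
    and "\<And>x. 0 < x \<Longrightarrow> x < b \<Longrightarrow> ennreal \<epsilon> \<le> g x"
  shows "ennreal (\<epsilon> * b) \<le> emeasure M {\<omega>\<in>space M. R \<omega> \<le> a}"
proof -
  have "ennreal (\<epsilon> * b) = (\<integral>\<^sup>+x. ennreal \<epsilon> * indicator {0<..<b} x \<partial>lborel)"
    using assms(2,4) by (simp add: nn_integral_cmult ennreal_mult[symmetric])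
  also have "\<dots> \<le> (\<integral>\<^sup>+x. g x * indicator {..a} x \<partial>lborel)"
    using assms(3,5) by (intro nn_integral_mono) (auto simp: indicator_def)
  also have "\<dots> = emeasure M (R -` {..a} \<inter> space M)"
    by (rule distributed_emeasure[OF assms(1), symmetric]) simp
  finally show ?thesis by (simp add: vimage_def Int_def conj_commute)
qed

lemma suminf_ennreal_harmonic: "(\<Sum>j. ennreal (1 / real (Suc j))) = \<infinity>"
  unfolding infinity_ennreal_def
  using not_summable_harmonic[where 'a=real] summable_Suc_iff[where f="\<lambda>n. 1 / real n"]
  by (intro summable_iff_suminf_neq_top) (auto simp: inverse_eq_divide)

theorem mainTheorem10:
  fixes M :: "'a measure" and X :: "nat \<Rightarrow> 'a \<Rightarrow> real" and R :: "'a \<Rightarrow> real"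
    and f :: "real \<Rightarrow> real" and l \<epsilon> \<delta> t :: real
  assumes "prob_space M"
    and "l > 0"
    and "\<And>k. distributed M lborel (X k) (\<lambda>x. ennreal (exponential_density l x))"
    and "f \<in> borel_measurable borel"
    and "\<And>r. f r \<ge> 0"
    and "\<And>r. r \<le> 0 \<Longrightarrow> f r = 0"
    and "distributed M lborel R (\<lambda>r. ennreal (f r))"
    and "prob_space.indep_vars M (\<lambda>_. borel) (case_option R X) UNIV"
    and "\<epsilon> > 0" and "\<delta> > 0"
    and "\<And>r. 0 < r \<Longrightarrow> r < \<delta> \<Longrightarrow> f r > \<epsilon>"
    and "t > 0"
  shows "(\<integral>\<^sup>+ \<omega>. rart_N X R t \<omega> \<partial>M) = \<infinity>"
proof -
  define c where "c = min \<delta> t"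
  have "c > 0" using assms(10,12) by (simp add: c_def)
  have prob_ge: "ennreal (\<epsilon> * (c / real (Suc j))) \<le> emeasure M {\<omega>\<in>space M. R \<omega> \<le> t / real (Suc j)}" for j
  proof -
    have "c / real (Suc j) \<le> c"
      using \<open>c > 0\<close> by (simp add: divide_le_eq)
    moreover have "c / real (Suc j) \<le> t / real (Suc j)"
      by (simp add: c_def divide_right_mono)
    moreover have "\<epsilon> \<le> f x" if "0 < x" "x < c" for x
      using that assms(11)[of x] by (simp add: c_def)
    ultimately show ?thesis
      using \<open>c > 0\<close> assms(9)
      by (intro distributed_emeasure_le_ge[OF assms(7)]) (auto intro: ennreal_leI)
  qed
  have "\<infinity> = ennreal (\<epsilon> * c) * (\<Sum>j. ennreal (1 / real (Suc j)))"
    unfolding suminf_ennreal_harmonic using \<open>c > 0\<close> assms(9) by (simp add: ennreal_mult_top)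
  also have "\<dots> \<le> (\<Sum>j. emeasure M {\<omega>\<in>space M. R \<omega> \<le> t / real (Suc j)})"
    using prob_ge \<open>c > 0\<close> assms(9)
    by (simp add: ennreal_suminf_cmult[symmetric] ennreal_mult[symmetric] suminf_le summableI)
  also have "\<dots> \<le> (\<integral>\<^sup>+ \<omega>. rart_N X R t \<omega> \<partial>M)"
    using distributed_measurable[OF assms(7)] by (intro nn_integral_rart_N_ge) simp
  finally show ?thesis by (simp add: top_unique)
qed

end
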